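(* If $t\in[1,2]$, then $w(t,a)=w_1(t,a)$ and $w(t,a)/W(t,a)\le 2/3$ for all $a\in[(3t+2)/4,2]$.
   Context: For $(t,a)\in\mathbb R^2$ define $w_1(t,a)=(2t+3)a-(3t^2/4+t)$, $w_2(t,a)=(4t+4)a-(3t^2/2+2t+2)$, $w_3(t,a)=8ta-(3t^2+4t-4)$, $W(t,a)=[(t+2)a-(t^2/2+t)](t+2)$, and $w(t,a)=\min\{w_1(t,a),w_2(t,a),w_3(t,a)\}$. *)

theory Defs
  imports Complex_Main
begin

definition w1 :: "real \<Rightarrow> real \<Rightarrow> real" where
  "w1 t a = (2*t+3)*a - (3*t^2/4 + t)"
definition w2 :: "real \<Rightarrow> real \<Rightarrow> real" where
  "w2 t a = (4*t+4)*a - (3*t^2/2 + 2*t + 2)"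
definition w3 :: "real \<Rightarrow> real \<Rightarrow> real" where
  "w3 t a = 8*t*a - (3*t^2 + 4*t - 4)"
definition WW :: "real \<Rightarrow> real \<Rightarrow> real" where
  "WW t a = ((t+2)*a - (t^2/2 + t)) * (t+2)"
definition w :: "real \<Rightarrow> real \<Rightarrow> real" where
  "w t a = min (w1 t a) (min (w2 t a) (w3 t a))"

end

theory Submission
  imports Defs
begin

text \<open>Writing \<open>d = a - (3t+2)/4\<close>, each of \<open>w\<^sub>2 - w\<^sub>1\<close>, \<open>w\<^sub>3 - w\<^sub>1\<close> and \<open>2W - 3w\<^sub>1\<close>
  is affine in \<open>d\<close> with a slope and an intercept that are nonnegative for \<open>t \<ge> 1\<close>;
  moreover \<open>W = (t+2)\<^sup>2 (a - t/2)\<close> is positive on the range of \<open>a\<close>.\<close>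

lemma w2_minus_w1_eq:
  "w2 t a - w1 t a = (2*t+1) * (a - (3*t+2)/4) + 3*(t-1)*(t+2)/4"
  by (simp add: w1_def w2_def power2_eq_square field_simps)

lemma w3_minus_w1_eq:
  "w3 t a - w1 t a = (6*t-3) * (a - (3*t+2)/4) + (9*(t-1)^2 + 9*t + 1)/4"
  by (simp add: w1_def w3_def power2_eq_square field_simps)

lemma WW_eq: "WW t a = (t+2)^2 * (a - t/2)"
  by (simp add: WW_def power2_eq_square field_simps)

lemma two_WW_minus_three_w1_eq:
  "2 * WW t a - 3 * w1 t a
     = (2*t^2+2*t-1) * (a - (3*t+2)/4) + (t-1)*(t+2)*(2*t+1)/4"
  by (simp add: w1_def WW_def power2_eq_square field_simps)

lemma w1_le_w2:
  assumes "1 \<le> t" and "(3*t+2)/4 \<le> a"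
  shows "w1 t a \<le> w2 t a"
proof -
  have "0 \<le> (2*t+1) * (a - (3*t+2)/4) + 3*(t-1)*(t+2)/4"
    using assms by (intro add_nonneg_nonneg) simp_all
  then show ?thesis
    using w2_minus_w1_eq[of t a] by linarith
qed

lemma w1_le_w3:
  assumes "1/2 \<le> t" and "(3*t+2)/4 \<le> a"
  shows "w1 t a \<le> w3 t a"
proof -
  have "0 \<le> (6*t-3) * (a - (3*t+2)/4) + (9*(t-1)^2 + 9*t + 1)/4"
    using assms by (intro add_nonneg_nonneg) simp_all
  then show ?thesis
    using w3_minus_w1_eq[of t a] by linarith
qed

lemma w_eq_w1:
  assumes "1 \<le> t" and "(3*t+2)/4 \<le> a"
  shows "w t a = w1 t a"
  using w1_le_w2[OF assms] w1_le_w3[of t a] assms by (simp add: w_def)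

lemma WW_pos:
  assumes "t \<noteq> -2" and "t/2 < a"
  shows "0 < WW t a"
  using assms by (simp add: WW_eq)

lemma three_w1_le_two_WW:
  assumes "1 \<le> t" and "(3*t+2)/4 \<le> a"
  shows "3 * w1 t a \<le> 2 * WW t a"
proof -
  have "1 \<le> t^2"
    using assms(1) by (rule one_le_power)
  then have "0 \<le> 2*t^2+2*t-1"
    using assms(1) by linarith
  then have "0 \<le> (2*t^2+2*t-1) * (a - (3*t+2)/4) + (t-1)*(t+2)*(2*t+1)/4"
    using assms by (intro add_nonneg_nonneg) simp_all
  then show ?thesis
    using two_WW_minus_three_w1_eq[of t a] by linarith
qed

theorem lemmaA6:
  fixes t :: real
  assumes "1 \<le> t" and "t \<le> 2"
  shows "\<forall>a \<in> {(3*t+2)/4 .. 2}. w t a = w1 t a \<and> w t a / WW t a \<le> 2/3"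
proof
  fix a assume "a \<in> {(3*t+2)/4 .. 2}"
  then have a_lower: "(3*t+2)/4 \<le> a" by simp
  have w: "w t a = w1 t a"
    using w_eq_w1[OF assms(1) a_lower] .
  have "0 < WW t a"
    using assms(1) a_lower by (intro WW_pos) simp_all
  moreover have "3 * w1 t a \<le> 2 * WW t a"
    using three_w1_le_two_WW[OF assms(1) a_lower] .
  ultimately show "w t a = w1 t a \<and> w t a / WW t a \<le> 2/3"
    using w by (simp add: divide_le_eq)
qed

end
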